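(* Assume (A1)–(A2) below. Let $(\rho,w)$ be a classical solution on $[0,T]$ of $(S_{\varepsilon,\gamma})$ and $(\hat\rho,\hat w)$ a classical solution on $[0,T]$ of $(S_{\hat\varepsilon,\hat\gamma})$, with $(\hat\rho,\hat w)$ Lipschitz. Let $h(\tilde\rho,\tilde w)=\varepsilon^2\tilde w^2/2+P'(\tilde\rho)+gz$, $m(\tilde\rho,\tilde w)=a\tilde\rho\tilde w$ be the co-state maps of the unperturbed problem, and $h_\partial=h(\rho,w)|_{\{0,\ell\}}$, $\hat h_\partial=\hat h(\hat\rho,\hat w)|_{\{0,\ell\}}$ with $\hat h(\hat\rho,\hat w)=\hat\varepsilon^2\hat w^2/2+P'(\hat\rho)+gz$. Then at every time $$-\Big[(h(\rho,w)-h(\hat\rho,\hat w))(m(\rho,w)-m(\hat\rho,\hat w))\Big]_{x=0}^{x=\ell}\le\hat C_\partial\big(|h_\partial-\hat h_\partial|_\partial+|\varepsilon^2-\hat\varepsilon^2|\big),$$ with $\hat C_\partial$ depending only on the bounds in (A1)–(A2) and the Lipschitz bounds of $(\hat\rho,\hat w)$.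
   Context: Fix $\ell>0$, $a:[0,\ell]\to\mathbb{R}$, a constant $g$, $z:[0,\ell]\to\mathbb{R}$, smooth strictly convex $P:(0,\infty)\to\mathbb{R}$. System $(S_{\varepsilon,\gamma})$: $a\partial_\tau\rho+\partial_xm=0$, $\varepsilon^2\partial_\tau w+\partial_xh+\gamma|w|w=0$, $m=a\rho w$, $h=\varepsilon^2w^2/2+P'(\rho)+gz$ on $0<x<\ell$. (A1): positive constants $\underline\rho\le\bar\rho$, $\bar w$, $\bar\varepsilon$ with $\rho P''(\rho)\ge4\bar\varepsilon^2\bar w^2$ for $\underline\rho\le\rho\le\bar\rho$; $0<\underline a\le a\le\bar a$; $|gz|\le\bar g\bar z$. (A2): $0\le\varepsilon,\hat\varepsilon\le\bar\varepsilon$, $0<\underline\gamma\le\gamma,\hat\gamma\le\bar\gamma$, solutions satisfy $\underline\rho\le\rho\le\bar\rho$, $-\bar w\le w\le\bar w$. A classical solution on $[0,T]$: $(\rho,w)\in C^1([0,T];L^2(0,\ell)^2)$ satisfying these bounds, $(h,m)\in C^0([0,T];H^1(0,\ell)^2)$, with $(a\partial_\tau\rho,q)+(\partial_xm,q)=0$ and $(\varepsilon^2\partial_\tau w,r)-(h,\partial_xr)+(\gamma|w|w,r)=-[hr]_0^\ell$ for all $q,r\in H^1(0,\ell)$ and all times. For boundary values $f$, $|f|_\partial=\sqrt{|f(0)|^2+|f(\ell)|^2}$. *)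

theory Defs
  imports "HOL-Analysis.Analysis"
begin

definition L2 :: "real \<Rightarrow> (real \<Rightarrow> real) \<Rightarrow> bool" where
  "L2 l f \<longleftrightarrow> set_borel_measurable lebesgue {0..l} f
      \<and> set_integrable lebesgue {0..l} (\<lambda>x. (f x)\<^sup>2)"

definition l2ip :: "real \<Rightarrow> (real \<Rightarrow> real) \<Rightarrow> (real \<Rightarrow> real) \<Rightarrow> real" where
  "l2ip l f g = (LINT x:{0..l}|lebesgue. f x * g x)"

definition l2norm :: "real \<Rightarrow> (real \<Rightarrow> real) \<Rightarrow> real" where
  "l2norm l f = sqrt (l2ip l f f)"

text \<open>g is the weak derivative of f in H1(0,l); f is taken as its continuous
  (absolutely continuous) representative on [0,l].\<close>
definition has_weak_deriv :: "real \<Rightarrow> (real \<Rightarrow> real) \<Rightarrow> (real \<Rightarrow> real) \<Rightarrow> bool" where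
  "has_weak_deriv l f g \<longleftrightarrow> L2 l f \<and> L2 l g
      \<and> (\<forall>x\<in>{0..l}. f x = f 0 + (LINT y:{0..x}|lebesgue. g y))"

definition strictly_convex_on :: "real set \<Rightarrow> (real \<Rightarrow> real) \<Rightarrow> bool" where
  "strictly_convex_on S f \<longleftrightarrow> (\<forall>x\<in>S. \<forall>y\<in>S. \<forall>u::real. x \<noteq> y \<and> 0 < u \<and> u < 1 \<longrightarrow>
      f (u * x + (1 - u) * y) < u * f x + (1 - u) * f y)"

definition smooth_on :: "real set \<Rightarrow> (real \<Rightarrow> real) \<Rightarrow> bool" where
  "smooth_on S f \<longleftrightarrow> (\<forall>k. \<forall>x\<in>S. ((deriv ^^ k) f) differentiable (at x))"

definition hmap :: "(real \<Rightarrow> real) \<Rightarrow> real \<Rightarrow> (real \<Rightarrow> real) \<Rightarrow> real \<Rightarrow> real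
    \<Rightarrow> real \<Rightarrow> real \<Rightarrow> real" where
  "hmap P g z eps x r v = eps\<^sup>2 * v\<^sup>2 / 2 + deriv P r + g * z x"

definition mmap :: "(real \<Rightarrow> real) \<Rightarrow> real \<Rightarrow> real \<Rightarrow> real \<Rightarrow> real" where
  "mmap a x r v = a x * r * v"

text \<open>Classical solution on [0,T] of (S_{eps,gamma}) with the pointwise bounds of (A2).\<close>
definition classical_solution ::
  "real \<Rightarrow> (real \<Rightarrow> real) \<Rightarrow> real \<Rightarrow> (real \<Rightarrow> real) \<Rightarrow> (real \<Rightarrow> real) \<Rightarrow> real \<Rightarrow> real
   \<Rightarrow> real \<Rightarrow> real \<Rightarrow> real \<Rightarrow> real
   \<Rightarrow> (real \<Rightarrow> real \<Rightarrow> real) \<Rightarrow> (real \<Rightarrow> real \<Rightarrow> real) \<Rightarrow> bool" where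
  "classical_solution l a g z P eps gam rlo rhi wb T rho w \<longleftrightarrow>
    (\<forall>t\<in>{0..T}. \<forall>x\<in>{0..l}. rlo \<le> rho t x \<and> rho t x \<le> rhi \<and> - wb \<le> w t x \<and> w t x \<le> wb) \<and>
    (\<exists>rho' w' hx mx.
      (\<forall>t\<in>{0..T}.
         L2 l (rho t) \<and> L2 l (w t) \<and> L2 l (rho' t) \<and> L2 l (w' t) \<and>
         ((\<lambda>s. l2norm l (\<lambda>x. (rho s x - rho t x) / (s - t) - rho' t x)) \<longlongrightarrow> 0) (at t within {0..T}) \<and>
         ((\<lambda>s. l2norm l (\<lambda>x. (w s x - w t x) / (s - t) - w' t x)) \<longlongrightarrow> 0) (at t within {0..T}) \<and>
         ((\<lambda>s. l2norm l (\<lambda>x. rho' s x - rho' t x)) \<longlongrightarrow> 0) (at t within {0..T}) \<and>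
         ((\<lambda>s. l2norm l (\<lambda>x. w' s x - w' t x)) \<longlongrightarrow> 0) (at t within {0..T}) \<and>
         has_weak_deriv l (\<lambda>x. hmap P g z eps x (rho t x) (w t x)) (hx t) \<and>
         has_weak_deriv l (\<lambda>x. mmap a x (rho t x) (w t x)) (mx t) \<and>
         ((\<lambda>s. l2norm l (\<lambda>x. hmap P g z eps x (rho s x) (w s x) - hmap P g z eps x (rho t x) (w t x))
               + l2norm l (\<lambda>x. hx s x - hx t x)) \<longlongrightarrow> 0) (at t within {0..T}) \<and>
         ((\<lambda>s. l2norm l (\<lambda>x. mmap a x (rho s x) (w s x) - mmap a x (rho t x) (w t x))
               + l2norm l (\<lambda>x. mx s x - mx t x)) \<longlongrightarrow> 0) (at t within {0..T}) \<and>
         (\<forall>q q'. has_weak_deriv l q q' \<longrightarrow>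
            l2ip l (\<lambda>x. a x * rho' t x) q + l2ip l (mx t) q = 0) \<and>
         (\<forall>r r'. has_weak_deriv l r r' \<longrightarrow>
            l2ip l (\<lambda>x. eps\<^sup>2 * w' t x) r
            - l2ip l (\<lambda>x. hmap P g z eps x (rho t x) (w t x)) r'
            + l2ip l (\<lambda>x. gam * \<bar>w t x\<bar> * w t x) r
            = - (hmap P g z eps l (rho t l) (w t l) * r l
                 - hmap P g z eps 0 (rho t 0) (w t 0) * r 0))))"

definition bnorm :: "real \<Rightarrow> (real \<Rightarrow> real) \<Rightarrow> real" where
  "bnorm l f = sqrt ((f 0)\<^sup>2 + (f l)\<^sup>2)"

end

theory Submission
  imports Defs
begin

(* By the bounds of (A2) the flux difference m(rho,w) - m(rho',w') is at most
   2 a_max rho_max w_max in absolute value, and h_eps(rho,w) - h_eps(rho',w') differs from the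
   boundary mismatch h_eps(rho,w) - h_eps'(rho',w') only by (eps^2 - eps'^2) w'^2/2. *)

lemma abs_le_bnorm: "\<bar>f 0\<bar> \<le> bnorm l f" "\<bar>f l\<bar> \<le> bnorm l f"
  unfolding bnorm_def
  by (metis add.commute le_add_same_cancel1 real_sqrt_abs real_sqrt_le_mono zero_le_power2)+

lemma hmap_diff_change_eps:
  "hmap P g z eps x r v - hmap P g z eps x r' v'
   = (hmap P g z eps x r v - hmap P g z eps' x r' v') - (eps\<^sup>2 - eps'\<^sup>2) * v'\<^sup>2 / 2"
  unfolding hmap_def by (simp add: field_simps)

lemma abs_mmap_diff_le:
  fixes A R W :: real
  assumes "\<bar>a x\<bar> \<le> A" "\<bar>r\<bar> \<le> R" "\<bar>v\<bar> \<le> W" "\<bar>r'\<bar> \<le> R" "\<bar>v'\<bar> \<le> W"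
  shows "\<bar>mmap a x r v - mmap a x r' v'\<bar> \<le> 2 * A * R * W"
proof -
  have "0 \<le> A" "0 \<le> R"
    using assms(1,2) by linarith+
  then have "\<bar>a x * r * v\<bar> \<le> A * R * W" if "\<bar>r\<bar> \<le> R" "\<bar>v\<bar> \<le> W" for r v :: real
    unfolding abs_mult using assms(1) that
    by (intro mult_mono mult_nonneg_nonneg) auto
  then have "\<bar>a x * r * v\<bar> \<le> A * R * W" "\<bar>a x * r' * v'\<bar> \<le> A * R * W"
    using assms(2-5) by blast+
  then show ?thesis
    unfolding mmap_def by linarith
qed

lemma classical_solution_abs_le:
  assumes "classical_solution l a g z P eps gam rlo rhi wb T rho w"
    and "0 < rlo" "t \<in> {0..T}" "x \<in> {0..l}"
  shows "\<bar>rho t x\<bar> \<le> rhi" "\<bar>w t x\<bar> \<le> wb"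
  using assms unfolding classical_solution_def by fastforce+

lemma abs_perturbed_product_le:
  fixes B E M W :: real
  assumes "\<bar>d\<bar> \<le> B" "\<bar>m\<bar> \<le> M" "\<bar>v\<bar> \<le> W"
  shows "\<bar>(d - E * v\<^sup>2 / 2) * m\<bar> \<le> M * (B + \<bar>E\<bar> * W\<^sup>2 / 2)"
proof -
  have "\<bar>v\<bar>\<^sup>2 \<le> W\<^sup>2"
    using assms(3) by (intro power_mono) auto
  then have "v\<^sup>2 \<le> W\<^sup>2"
    by simp
  then have "\<bar>E * v\<^sup>2 / 2\<bar> \<le> \<bar>E\<bar> * W\<^sup>2 / 2"
    by (simp add: abs_mult mult_left_mono)
  then have "\<bar>d - E * v\<^sup>2 / 2\<bar> \<le> B + \<bar>E\<bar> * W\<^sup>2 / 2"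
    using assms(1) by linarith
  then show ?thesis
    unfolding abs_mult using assms(2) by (subst mult.commute) (intro mult_mono, auto)
qed

lemma boundary_perturbed_product_le:
  fixes B E M W :: real
  assumes "\<bar>d\<^sub>0\<bar> \<le> B" "\<bar>d\<^sub>1\<bar> \<le> B" "\<bar>m\<^sub>0\<bar> \<le> M" "\<bar>m\<^sub>1\<bar> \<le> M" "\<bar>v\<^sub>0\<bar> \<le> W" "\<bar>v\<^sub>1\<bar> \<le> W"
  shows "- ((d\<^sub>1 - E * v\<^sub>1\<^sup>2 / 2) * m\<^sub>1 - (d\<^sub>0 - E * v\<^sub>0\<^sup>2 / 2) * m\<^sub>0) \<le> M * (2 + W\<^sup>2) * (B + \<bar>E\<bar>)"
proof -
  have "0 \<le> M" "0 \<le> B"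
    using assms(1,3) by linarith+
  then have "2 * (M * (B + \<bar>E\<bar> * W\<^sup>2 / 2)) \<le> M * (2 + W\<^sup>2) * (B + \<bar>E\<bar>)"
    by (simp add: algebra_simps mult_left_mono)
  moreover have "\<bar>(d\<^sub>1 - E * v\<^sub>1\<^sup>2 / 2) * m\<^sub>1\<bar> \<le> M * (B + \<bar>E\<bar> * W\<^sup>2 / 2)"
    "\<bar>(d\<^sub>0 - E * v\<^sub>0\<^sup>2 / 2) * m\<^sub>0\<bar> \<le> M * (B + \<bar>E\<bar> * W\<^sup>2 / 2)"
    using abs_perturbed_product_le assms by blast+
  ultimately show ?thesis
    by linarith
qed

theorem corollary4p8:
  fixes l rlo rhi wb epsb alo ahi gb zb glo ghi Lr Lw :: real
  assumes "l > 0"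
    and "0 < rlo" "rlo \<le> rhi" "0 < wb" "0 < epsb" "0 < alo" "alo \<le> ahi"
    and "0 < glo" "glo \<le> ghi"
  shows "\<exists>C::real. \<forall>(a::real \<Rightarrow> real) (g::real) (z::real \<Rightarrow> real) (P::real \<Rightarrow> real)
      (eps::real) (eh::real) (gam::real) (gh::real) (T::real)
      (rho::real \<Rightarrow> real \<Rightarrow> real) (w::real \<Rightarrow> real \<Rightarrow> real)
      (rh::real \<Rightarrow> real \<Rightarrow> real) (wh::real \<Rightarrow> real \<Rightarrow> real).
      smooth_on {0<..} P \<and> strictly_convex_on {0<..} P
      \<and> (\<forall>r\<in>{rlo..rhi}. r * deriv (deriv P) r \<ge> 4 * epsb\<^sup>2 * wb\<^sup>2)
      \<and> (\<forall>x\<in>{0..l}. alo \<le> a x \<and> a x \<le> ahi)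
      \<and> (\<forall>x\<in>{0..l}. \<bar>g * z x\<bar> \<le> gb * zb)
      \<and> 0 \<le> eps \<and> eps \<le> epsb \<and> 0 \<le> eh \<and> eh \<le> epsb
      \<and> glo \<le> gam \<and> gam \<le> ghi \<and> glo \<le> gh \<and> gh \<le> ghi
      \<and> classical_solution l a g z P eps gam rlo rhi wb T rho w
      \<and> classical_solution l a g z P eh gh rlo rhi wb T rh wh
      \<and> lipschitz_on Lr ({0..T} \<times> {0..l}) (\<lambda>(t, x). rh t x)
      \<and> lipschitz_on Lw ({0..T} \<times> {0..l}) (\<lambda>(t, x). wh t x)
      \<longrightarrow> (\<forall>t\<in>{0..T}.
            - ((hmap P g z eps l (rho t l) (w t l) - hmap P g z eps l (rh t l) (wh t l))
                 * (mmap a l (rho t l) (w t l) - mmap a l (rh t l) (wh t l))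
               - (hmap P g z eps 0 (rho t 0) (w t 0) - hmap P g z eps 0 (rh t 0) (wh t 0))
                 * (mmap a 0 (rho t 0) (w t 0) - mmap a 0 (rh t 0) (wh t 0)))
            \<le> C * (bnorm l (\<lambda>x. hmap P g z eps x (rho t x) (w t x) - hmap P g z eh x (rh t x) (wh t x))
                   + \<bar>eps\<^sup>2 - eh\<^sup>2\<bar>))"
proof (intro exI[of _ "2 * ahi * rhi * wb * (2 + wb\<^sup>2)"] allI impI ballI, elim conjE)
  fix a g z P eps eh gam gh T rho w rh wh t
  assume a_bounds: "\<forall>x\<in>{0..l}. alo \<le> a x \<and> a x \<le> ahi"
    and sol: "classical_solution l a g z P eps gam rlo rhi wb T rho w"
    and sol_h: "classical_solution l a g z P eh gh rlo rhi wb T rh wh"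
    and t: "t \<in> {0..T}"
  define F where "F x = hmap P g z eps x (rho t x) (w t x) - hmap P g z eh x (rh t x) (wh t x)" for x
  have "\<bar>a x\<bar> \<le> ahi" if "x \<in> {0..l}" for x
    using a_bounds assms(6) that by fastforce
  then have m_bound: "\<bar>mmap a x (rho t x) (w t x) - mmap a x (rh t x) (wh t x)\<bar> \<le> 2 * ahi * rhi * wb"
    and wh_bound: "\<bar>wh t x\<bar> \<le> wb" if "x \<in> {0..l}" for x
    using that classical_solution_abs_le[OF sol assms(2) t]
      classical_solution_abs_le[OF sol_h assms(2) t]
    by (auto intro!: abs_mmap_diff_le)
  have ends: "0 \<in> {0..l}" "l \<in> {0..l}"
    using assms(1) by auto
  show "- ((hmap P g z eps l (rho t l) (w t l) - hmap P g z eps l (rh t l) (wh t l))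
             * (mmap a l (rho t l) (w t l) - mmap a l (rh t l) (wh t l))
           - (hmap P g z eps 0 (rho t 0) (w t 0) - hmap P g z eps 0 (rh t 0) (wh t 0))
             * (mmap a 0 (rho t 0) (w t 0) - mmap a 0 (rh t 0) (wh t 0)))
        \<le> 2 * ahi * rhi * wb * (2 + wb\<^sup>2) * (bnorm l F + \<bar>eps\<^sup>2 - eh\<^sup>2\<bar>)"
    unfolding hmap_diff_change_eps[where eps' = eh] F_def[symmetric]
    using abs_le_bnorm[of F l] m_bound[OF ends(1)] m_bound[OF ends(2)]
      wh_bound[OF ends(1)] wh_bound[OF ends(2)]
    by (rule boundary_perturbed_product_le)
qed

end
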